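(* Let $G$ be a finite simple triangle-free graph having a perfect matching $M$. Let $h$ denote the number of connected components of the graph $G\setminus M$ (the spanning subgraph of $G$ with edge set $E(G)\setminus M$). Let $OPT$ denote the number of colours in an optimal (maximum) edge $2$-colouring of $G$. Then $$OPT\leq \frac{8}{5}\bigl(|M|+h\bigr).$$
   Context: An edge $2$-colouring of a graph $G$ is an assignment of colours to the edges of $G$ (not necessarily proper) such that, at every vertex, the edges incident with that vertex carry at most $2$ distinct colours. An optimal edge $2$-colouring is one that uses the maximum possible number of distinct colours; $OPT$ is that maximum number. *)

theory Defs
  imports Complex_Main
begin

definition simple_graph :: "'a set \<Rightarrow> 'a set set \<Rightarrow> bool" where
  "simple_graph V E \<longleftrightarrow> finite V \<and> (\<forall>e\<in>E. e \<subseteq> V \<and> card e = 2)"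

definition triangle_free :: "'a set set \<Rightarrow> bool" where
  "triangle_free E \<longleftrightarrow> \<not> (\<exists>a b c. {a,b} \<in> E \<and> {b,c} \<in> E \<and> {a,c} \<in> E)"

definition perfect_matching :: "'a set \<Rightarrow> 'a set set \<Rightarrow> 'a set set \<Rightarrow> bool" where
  "perfect_matching V E M \<longleftrightarrow> M \<subseteq> E \<and>
     (\<forall>e1\<in>M. \<forall>e2\<in>M. e1 \<noteq> e2 \<longrightarrow> e1 \<inter> e2 = {}) \<and>
     (\<forall>v\<in>V. \<exists>e\<in>M. v \<in> e)"

definition connected_rel :: "'a set \<Rightarrow> 'a set set \<Rightarrow> ('a \<times> 'a) set" where
  "connected_rel V E = {(u,v). u \<in> V \<and> v \<in> V \<and> (u,v) \<in> ({(x,y). {x,y} \<in> E})\<^sup>*}"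

definition num_components :: "'a set \<Rightarrow> 'a set set \<Rightarrow> nat" where
  "num_components V E = card (V // connected_rel V E)"

definition edge_2_colouring :: "'a set \<Rightarrow> 'a set set \<Rightarrow> ('a set \<Rightarrow> nat) \<Rightarrow> bool" where
  "edge_2_colouring V E c \<longleftrightarrow> (\<forall>v\<in>V. card (c ` {e\<in>E. v \<in> e}) \<le> 2)"

definition OPT :: "'a set \<Rightarrow> 'a set set \<Rightarrow> nat" where
  "OPT V E = Max {card (c ` E) | c. edge_2_colouring V E c}"

end

(*
  Fix an optimal edge 2-colouring and, for each colour c, let S_c be the set of vertices met by
  edges of colour c. Every vertex sees at most two colours, so the sizes |S_c| sum to at most
  2|V| = 4|M|. On the other hand the h components of G - M are reconnected colour by colour:
  colour c merges components either through S_c at once, at cost |S_c| - 1, or through its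
  non-matching edges one at a time, so |V| <= h + (sum of these costs). For every colour,
  10 + 4 cost(c) <= 6 |S_c| by a case analysis on the number (at most two) of matching edges of
  colour c, in which triangle-freeness bounds the remaining edges of that colour. The only
  exception is a colour carried by a single non-matching edge; its deficit of 2 is passed on to
  the colours of the matching edges at its two endpoints, whose inequalities have room for it.
  Summing gives 10 OPT + 4 (|V| - h) <= 12 |V|, i.e. 5 OPT <= 4 |V| + 2 h <= 8 (|M| + h).
*)
theory Submission
  imports Defs
begin

lemma sum_card_Collect_swap:
  assumes "finite A" "finite B"
  shows "(\<Sum>x\<in>A. card {y\<in>B. R x y}) = (\<Sum>y\<in>B. card {x\<in>A. R x y})"
  using sum.swap_restrict[OF assms, of "\<lambda>_ _. 1::nat" R] by simp

lemma card_Union_disjoint_doubletons: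
  assumes "pairwise disjnt M" "\<And>e. e \<in> M \<Longrightarrow> card e = 2"
  shows "card (\<Union>M) = 2 * card M"
proof -
  have "card (\<Union>M) = sum card M"
    by (rule card_Union_disjoint) (use assms in \<open>auto intro: card_ge_0_finite\<close>)
  also have "\<dots> = 2 * card M"
    using assms(2) by simp
  finally show ?thesis .
qed

lemma card_le_2_if_subset_doubleton: "A \<subseteq> {a, b} \<Longrightarrow> card A \<le> 2"
  using card_mono[of "{a, b}" A] by (cases "a = b") simp_all

lemma two_subset_of_three:
  assumes "e \<subseteq> {x, y, z}" "card e = 2"
  shows "e = {x, y} \<or> e = {x, z} \<or> e = {y, z}"
proof -
  obtain a b where "e = {a, b}" "a \<noteq> b"
    using assms(2) card_2_iff by metis
  then show ?thesis
    using assms(1) by auto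
qed

lemma two_subset_of_four:
  assumes "e \<subseteq> {x, x', y, y'}" "card e = 2"
  shows "e = {x, x'} \<or> e = {y, y'} \<or> e = {x, y} \<or> e = {x, y'} \<or> e = {x', y} \<or> e = {x', y'}"
proof -
  obtain a b where "e = {a, b}" "a \<noteq> b"
    using assms(2) card_2_iff by metis
  then show ?thesis
    using assms(1) by (simp only: insert_subset; elim conjE insertE; simp add: insert_commute)
qed

lemma card_le_2_if_no_two_consecutive:
  assumes "F \<subseteq> {a, b, c, d}"
    and "\<not> (a \<in> F \<and> b \<in> F)" "\<not> (b \<in> F \<and> c \<in> F)" "\<not> (c \<in> F \<and> d \<in> F)" "\<not> (d \<in> F \<and> a \<in> F)"
  shows "card F \<le> 2"
proof -
  have "F \<subseteq> {a, c} \<or> F \<subseteq> {b, d}"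
    using assms by blast
  then show ?thesis
    by (metis card_le_2_if_subset_doubleton)
qed

abbreviation adj :: "'a set set \<Rightarrow> ('a \<times> 'a) set" where
  "adj E \<equiv> {(x, y). {x, y} \<in> E}"

lemma equiv_connected_rel: "equiv V (connected_rel V E)"
proof (rule equivI)
  have "sym (adj E)"
    by (auto simp: sym_def insert_commute)
  then show "sym (connected_rel V E)"
    using sym_rtrancl unfolding sym_def connected_rel_def by blast
  show "trans (connected_rel V E)"
    unfolding trans_def connected_rel_def by (auto intro: rtrancl_trans)
qed (auto simp: refl_on_def connected_rel_def)

lemma connected_rel_mono: "E1 \<subseteq> E2 \<Longrightarrow> connected_rel V E1 \<subseteq> connected_rel V E2"
  unfolding connected_rel_def using rtrancl_mono[of "adj E1" "adj E2"] by auto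

lemma num_components_empty: "num_components V {} = card V"
proof -
  have "V // connected_rel V {} = (\<lambda>x. {x}) ` V"
    unfolding connected_rel_def quotient_def by auto
  then show ?thesis
    unfolding num_components_def by (simp add: card_image)
qed

lemma rtrancl_adj_reaches:
  assumes "(x, y) \<in> (adj E2)\<^sup>*" and "\<And>e. e \<in> E2 - E1 \<Longrightarrow> e \<subseteq> W"
  shows "(x, y) \<in> (adj E1)\<^sup>* \<or> (\<exists>w\<in>W. (x, w) \<in> (adj E1)\<^sup>*)"
  using assms(1)
proof (induction rule: rtrancl_induct)
  case (step y z)
  then show ?case
    using assms(2)[of "{y, z}"] by (cases "{y, z} \<in> E1") (auto intro: rtrancl_into_rtrancl)
qed simp

lemma card_le_card_image_add:
  assumes "finite Q" "finite Q'" "f ` Q \<subseteq> Q'" "N \<subseteq> Q" "inj_on f N"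
    and "f ` N \<inter> f ` (Q - N) = {}"
  shows "card Q \<le> card Q' + (card (Q - N) - 1)"
proof -
  have fin: "finite N" "finite (Q - N)"
    using assms(1,4) finite_subset by auto
  have "card N + card (f ` (Q - N)) = card (f ` N \<union> f ` (Q - N))"
    using assms(5,6) fin by (simp add: card_Un_disjoint card_image)
  also have "\<dots> \<le> card Q'"
    using assms(2,3,4) by (intro card_mono) auto
  finally have "card N + card (f ` (Q - N)) \<le> card Q'" .
  moreover have "card (Q - N) \<le> card (f ` (Q - N)) + (card (Q - N) - 1)"
  proof (cases "Q - N = {}")
    case False
    then have "1 \<le> card (f ` (Q - N))"
      using fin(2) by (simp add: Suc_le_eq card_gt_0_iff)
    then show ?thesis
      by linarith
  qed (simp only: card.empty)
  moreover have "card Q = card N + card (Q - N)"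
    using card_Diff_subset[OF fin(1) assms(4)] card_mono[OF assms(1,4)] by simp
  ultimately show ?thesis
    by linarith
qed

lemma Image_class_coarser:
  assumes "equiv A s" "r \<subseteq> s" "(x, x) \<in> r"
  shows "s `` (r `` {x}) = s `` {x}"
  using assms unfolding equiv_def trans_def by blast

text \<open>Coarsening an equivalence relation merges classes; if every newly related pair passes
  through \<open>W\<close>, the classes that fuse are among the at most \<open>card W\<close> classes meeting \<open>W\<close>.\<close>
lemma card_quotient_le_coarser:
  assumes fin: "finite A" and r: "equiv A r" and s: "equiv A s" and "r \<subseteq> s" and "W \<subseteq> A"
    and glue: "\<And>x y. (x, y) \<in> s \<Longrightarrow> (x, y) \<in> r \<or> (\<exists>w\<in>W. (x, w) \<in> r)"
  shows "card (A//r) \<le> card (A//s) + (card W - 1)"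
proof -
  have refl_r: "(x, x) \<in> r" if "x \<in> A" for x
    using r that by (auto simp: equiv_def refl_on_def)
  define N where "N = {X \<in> A//r. X \<inter> W = {}}"
  have key: "X = Y" if X: "X \<in> N" and Y: "Y \<in> A//r" and XY: "s `` X = s `` Y" for X Y
  proof -
    obtain x y where x: "x \<in> A" "X = r``{x}" and y: "y \<in> A" "Y = r``{y}"
      using X Y unfolding N_def by (auto elim!: quotientE)
    then have "(x, y) \<in> s"
      using XY Image_class_coarser[OF s \<open>r \<subseteq> s\<close>] refl_r s by (simp add: eq_equiv_class_iff)
    with glue consider "(x, y) \<in> r" | w where "w \<in> W" "(x, w) \<in> r"
      by blast
    then show ?thesis
    proof cases
      case 1
      then show ?thesis
        using r x y by (simp add: equiv_class_eq_iff)
    next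
      case 2
      then show ?thesis
        using X x unfolding N_def by auto
    qed
  qed
  have "A//r - N \<subseteq> (\<lambda>w. r``{w}) ` W"
  proof
    fix X assume "X \<in> A//r - N"
    then obtain x w where "x \<in> A" "X = r``{x}" "w \<in> W" "w \<in> X"
      unfolding N_def by (auto elim!: quotientE)
    then show "X \<in> (\<lambda>w. r``{w}) ` W"
      using r by (auto simp: equiv_class_eq_iff)
  qed
  then have "card (A//r - N) \<le> card W"
    using fin \<open>W \<subseteq> A\<close> by (meson card_image_le card_mono finite_imageI finite_subset order_trans)
  moreover have "card (A//r) \<le> card (A//s) + (card (A//r - N) - 1)"
  proof (rule card_le_card_image_add)
    show "finite (A//r)" "finite (A//s)"
      using finite_quotient[OF fin equiv_type[OF r]] finite_quotient[OF fin equiv_type[OF s]] .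
    show "(\<lambda>X. s `` X) ` (A//r) \<subseteq> A//s"
      using Image_class_coarser[OF s \<open>r \<subseteq> s\<close>] refl_r by (auto elim!: quotientE intro: quotientI)
    show "inj_on (\<lambda>X. s `` X) N" "(\<lambda>X. s `` X) ` N \<inter> (\<lambda>X. s `` X) ` (A//r - N) = {}"
      using key unfolding inj_on_def N_def by blast+
  qed (simp add: N_def)
  ultimately show ?thesis
    by linarith
qed

lemma num_components_le_add:
  assumes "finite V" "W \<subseteq> V" "E1 \<subseteq> E2" "\<And>e. e \<in> E2 - E1 \<Longrightarrow> e \<subseteq> W"
  shows "num_components V E1 \<le> num_components V E2 + (card W - 1)"
  unfolding num_components_def
proof (rule card_quotient_le_coarser[OF assms(1) equiv_connected_rel equiv_connected_rel
      connected_rel_mono[OF assms(3)] assms(2)])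
  fix x y assume "(x, y) \<in> connected_rel V E2"
  then show "(x, y) \<in> connected_rel V E1 \<or> (\<exists>w\<in>W. (x, w) \<in> connected_rel V E1)"
    using rtrancl_adj_reaches[OF _ assms(4)] assms(2) unfolding connected_rel_def by blast
qed

lemma card_le_num_components_add_sum:
  assumes "finite V" "finite I" "\<And>i. i \<in> I \<Longrightarrow> W i \<subseteq> V"
    and "\<And>e. e \<in> F \<Longrightarrow> e \<noteq> {} \<and> (\<exists>i\<in>I. e \<subseteq> W i)"
  shows "card V \<le> num_components V F + (\<Sum>i\<in>I. card (W i) - 1)"
  using assms(2-4)
proof (induction I arbitrary: F rule: finite_induct)
  case empty
  then have "F = {}"
    by blast
  then show ?case
    by (simp add: num_components_empty)
next
  case (insert i I)
  define F' where "F' = {e\<in>F. \<exists>j\<in>I. e \<subseteq> W j}"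
  have "card V \<le> num_components V F' + (\<Sum>j\<in>I. card (W j) - 1)"
    using insert.IH[of F'] insert.prems unfolding F'_def by auto
  moreover have "num_components V F' \<le> num_components V F + (card (W i) - 1)"
  proof (rule num_components_le_add[OF assms(1)])
    show "e \<subseteq> W i" if "e \<in> F - F'" for e
      using that insert.prems(2)[of e] unfolding F'_def by blast
  qed (use insert.prems in \<open>auto simp: F'_def\<close>)
  ultimately show ?case
    using insert.hyps by simp
qed

lemma finite_edges:
  assumes "simple_graph V E"
  shows "finite E"
proof -
  have "E \<subseteq> Pow V"
    using assms unfolding simple_graph_def by blast
  then show ?thesis
    using assms finite_subset unfolding simple_graph_def by blast
qed

lemma OPT_attained:
  assumes "finite E"
  obtains c where "edge_2_colouring V E c" "OPT V E = card (c ` E)"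
proof -
  define S where "S = {card (c ` E) | c. edge_2_colouring V E c}"
  have "S \<subseteq> {..card E}"
    unfolding S_def using card_image_le[OF assms] by auto
  then have "finite S"
    using finite_subset by blast
  moreover have "edge_2_colouring V E (\<lambda>_. 0)"
    unfolding edge_2_colouring_def by (simp add: card_image_le image_constant_conv)
  then have "S \<noteq> {}"
    unfolding S_def by blast
  ultimately have "Max S \<in> S"
    by (rule Max_in)
  then obtain c where "edge_2_colouring V E c" "Max S = card (c ` E)"
    unfolding S_def by blast
  moreover have "OPT V E = Max S"
    unfolding OPT_def S_def ..
  ultimately show ?thesis
    using that by simp
qed

lemma card_perfect_matching:
  assumes "simple_graph V E" "perfect_matching V E M"
  shows "card V = 2 * card M"
proof -
  have M: "M \<subseteq> E" "pairwise disjnt M" "V \<subseteq> \<Union>M"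
    using assms(2) unfolding perfect_matching_def pairwise_def disjnt_def by blast+
  have E: "e \<subseteq> V" "card e = 2" if "e \<in> E" for e
    using assms(1) that unfolding simple_graph_def by simp_all
  have "\<Union>M = V"
    using M(1,3) E(1) by blast
  then show ?thesis
    using card_Union_disjoint_doubletons[OF M(2)] M(1) E(2) by blast
qed

locale coloured_matched_graph =
  fixes V :: "'a set" and E M :: "'a set set" and col :: "'a set \<Rightarrow> nat"
  assumes simple: "simple_graph V E"
    and no_triangles: "triangle_free E"
    and matching: "perfect_matching V E M"
    and colouring: "edge_2_colouring V E col"
begin

lemma finite_V: "finite V"
  using simple by (simp add: simple_graph_def)

lemma edge_subset: "e \<in> E \<Longrightarrow> e \<subseteq> V"
  and card_edge: "e \<in> E \<Longrightarrow> card e = 2"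
  using simple by (auto simp: simple_graph_def)

lemma finite_E: "finite E"
  using finite_edges[OF simple] .

lemma M_subset_E: "M \<subseteq> E"
  and pairwise_disjnt_M: "pairwise disjnt M"
  and matching_covers: "v \<in> V \<Longrightarrow> \<exists>e\<in>M. v \<in> e"
  using matching by (auto simp: perfect_matching_def pairwise_def disjnt_def)

lemma no_triangle: "{x, y} \<in> E \<Longrightarrow> {x, z} \<in> E \<Longrightarrow> {y, z} \<in> E \<Longrightarrow> False"
  using no_triangles unfolding triangle_free_def by blast

lemma card_colours_at: "v \<in> V \<Longrightarrow> card (col ` {e\<in>E. v \<in> e}) \<le> 2"
  using colouring by (simp add: edge_2_colouring_def)

definition colours :: "nat set" where
  "colours = col ` E"

definition span_of :: "nat \<Rightarrow> 'a set" where
  "span_of c = \<Union>{e\<in>E. col e = c}"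

definition matched_edges :: "nat \<Rightarrow> 'a set set" where
  "matched_edges c = {e\<in>M. col e = c}"

definition matched_span :: "nat \<Rightarrow> 'a set" where
  "matched_span c = \<Union>(matched_edges c)"

definition free_edges :: "nat \<Rightarrow> 'a set set" where
  "free_edges c = {e\<in>E - M. col e = c}"

definition solo :: "nat \<Rightarrow> bool" where
  "solo c \<longleftrightarrow> (\<exists>e\<in>E - M. \<forall>e'\<in>E. col e' = c \<longleftrightarrow> e' = e)"

definition touches_solo :: "'a \<Rightarrow> bool" where
  "touches_solo v \<longleftrightarrow> (\<exists>c. solo c \<and> v \<in> span_of c)"

text \<open>Discharging: a solo colour sends one unit to each of its two endpoints, and every vertex
  forwards what it receives to the colour of its matching edge; \<open>matched_charge c\<close> is what
  colour \<open>c\<close> receives.\<close>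
definition solo_charge :: "nat \<Rightarrow> nat" where
  "solo_charge c = (if solo c then card (span_of c) else 0)"

definition matched_charge :: "nat \<Rightarrow> nat" where
  "matched_charge c = card {v \<in> matched_span c. touches_solo v}"

text \<open>Colour \<open>c\<close> reconnects the components of \<open>G - M\<close> either through \<open>span_of c\<close> at once or
  through its free edges one at a time; \<open>wide c\<close> is the condition under which the cost of the
  former, \<open>card (span_of c) - 1\<close>, is small enough for the charge inequality \<open>colour_charge_le\<close>.\<close>
definition wide :: "nat \<Rightarrow> bool" where
  "wide c \<longleftrightarrow> 6 + card (matched_span c) \<le> 2 * card (span_of c)"

definition merge_cover :: "nat \<Rightarrow> 'a set set" where
  "merge_cover c = (if wide c then {span_of c} else free_edges c)"

definition merge_cost :: "nat \<Rightarrow> nat" where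
  "merge_cost c = (if wide c then card (span_of c) - 1 else card (free_edges c))"

lemma finite_colours: "finite colours"
  unfolding colours_def using finite_E by simp

lemma span_of_subset: "span_of c \<subseteq> V"
  unfolding span_of_def using edge_subset by blast

lemma finite_span_of: "finite (span_of c)"
  using finite_subset[OF span_of_subset finite_V] .

lemma edge_subset_span_of: "e \<in> E \<Longrightarrow> e \<subseteq> span_of (col e)"
  unfolding span_of_def by blast

lemma card_span_of_ge_2:
  assumes "c \<in> colours"
  shows "2 \<le> card (span_of c)"
proof -
  obtain e where "e \<in> E" "c = col e"
    using assms unfolding colours_def by blast
  then show ?thesis
    using card_edge card_mono[OF finite_span_of edge_subset_span_of] by metis
qed

lemma span_of_eq_if_card_le:
  assumes "A \<subseteq> span_of c" "card (span_of c) \<le> card A"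
  shows "span_of c = A"
  using card_subset_eq[OF finite_span_of assms(1)] card_mono[OF finite_span_of assms(1)] assms(2)
  by simp

lemma edge_eq_if_subset: "e \<in> E \<Longrightarrow> e' \<in> E \<Longrightarrow> e \<subseteq> e' \<Longrightarrow> e = e'"
  using card_subset_eq[of e' e] card_edge card.infinite by (metis zero_neq_numeral)

lemma matched_span_subset_span_of: "matched_span c \<subseteq> span_of c"
  unfolding matched_span_def matched_edges_def span_of_def using M_subset_E by blast

lemma finite_matched_edges: "finite (matched_edges c)"
  unfolding matched_edges_def using finite_subset[OF M_subset_E finite_E] by simp

lemma card_matched_span: "card (matched_span c) = 2 * card (matched_edges c)"
  unfolding matched_span_def
proof (rule card_Union_disjoint_doubletons)
  have "matched_edges c \<subseteq> M"
    unfolding matched_edges_def by blast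
  then show "pairwise disjnt (matched_edges c)"
    using pairwise_subset[OF pairwise_disjnt_M] by blast
  show "card e = 2" if "e \<in> matched_edges c" for e
    using that M_subset_E card_edge unfolding matched_edges_def by blast
qed

lemma soloE:
  assumes "solo c"
  obtains e where "e \<in> E - M" "span_of c = e" "free_edges c = {e}" "matched_edges c = {}"
proof -
  from assms obtain e where e: "e \<in> E - M" and colour_c: "\<And>e'. e' \<in> E \<Longrightarrow> col e' = c \<longleftrightarrow> e' = e"
    unfolding solo_def by blast
  have "span_of c = e"
    unfolding span_of_def using e colour_c by blast
  moreover have "free_edges c = {e}"
    unfolding free_edges_def using e colour_c by blast
  moreover have "matched_edges c = {}"
    unfolding matched_edges_def using e colour_c M_subset_E by blast
  ultimately show ?thesis
    using e that by blast
qed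

lemma not_solo_matched: "e \<in> M \<Longrightarrow> \<not> solo (col e)"
  using M_subset_E unfolding solo_def by (metis DiffD2 subsetD)

lemma solo_if_unmatched:
  assumes "c \<in> colours" "matched_edges c = {}" "card (span_of c) \<le> 2"
  shows "solo c"
proof -
  obtain e0 where e0: "e0 \<in> E" "col e0 = c"
    using assms(1) unfolding colours_def by blast
  then have "span_of c = e0"
    using span_of_eq_if_card_le edge_subset_span_of card_edge assms(3) by metis
  then have "\<forall>e\<in>E. col e = c \<longleftrightarrow> e = e0"
    using e0 edge_subset_span_of edge_eq_if_subset by metis
  moreover have "e0 \<in> E - M"
    using assms(2) e0 unfolding matched_edges_def by blast
  ultimately show ?thesis
    unfolding solo_def by blast
qed

lemma free_edgesD:
  assumes "e \<in> free_edges c"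
  shows "e \<in> E" "e \<notin> M" "e \<subseteq> span_of c" "card e = 2"
  using assms edge_subset_span_of card_edge unfolding free_edges_def by auto

lemma free_edges_empty_if_span_of_matched:
  assumes "m \<in> M" "span_of c = m"
  shows "free_edges c = {}"
proof -
  have "e \<notin> free_edges c" for e
  proof
    assume e: "e \<in> free_edges c"
    then have "e = m"
      using edge_eq_if_subset[of e m] free_edgesD[OF e] assms M_subset_E by blast
    with e show False
      using free_edgesD(2) assms(1) by blast
  qed
  then show ?thesis
    by blast
qed

lemma card_free_edges_le_1:
  assumes "{x, x'} \<in> M" "span_of c \<subseteq> {x, x', z}"
  shows "card (free_edges c) \<le> 1"
proof -
  have "e = {x, z} \<or> e = {x', z}" if "e \<in> free_edges c" for e
    using two_subset_of_three[of e x x' z] free_edgesD[OF that] assms by auto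
  moreover have "\<not> ({x, z} \<in> free_edges c \<and> {x', z} \<in> free_edges c)"
    using no_triangle[of x x' z] assms(1) M_subset_E free_edgesD(1) by blast
  ultimately have "free_edges c \<subseteq> {{x, z}} \<or> free_edges c \<subseteq> {{x', z}}"
    by blast
  then show ?thesis
    by (auto dest: subset_singletonD)
qed

lemma card_free_edges_one_matched:
  assumes matched: "matched_edges c = {m}" and small: "card (span_of c) \<le> 3"
  shows "card (free_edges c) + 2 \<le> card (span_of c)"
proof -
  have m: "m \<in> M" "m \<subseteq> span_of c"
    using matched matched_span_subset_span_of[of c] unfolding matched_edges_def matched_span_def
    by auto
  then have card_m: "card m = 2"
    using M_subset_E card_edge by blast
  then obtain x x' where xx': "m = {x, x'}" "x \<noteq> x'"
    by (metis card_2_iff)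
  show ?thesis
  proof (cases "span_of c = m")
    case True
    then show ?thesis
      using free_edges_empty_if_span_of_matched[OF m(1)] card_m by simp
  next
    case False
    then obtain z where z: "z \<in> span_of c" "z \<notin> m"
      using m(2) by blast
    then have "{x, x', z} \<subseteq> span_of c" "card {x, x', z} = 3"
      using m(2) xx' by auto
    with small have "span_of c = {x, x', z}"
      using span_of_eq_if_card_le by simp
    with \<open>card {x, x', z} = 3\<close> show ?thesis
      using card_free_edges_le_1[of x x' c z] m(1) xx'(1) by simp
  qed
qed

lemma card_free_edges_two_matched:
  assumes matched: "matched_edges c = {m1, m2}" "m1 \<noteq> m2" and small: "card (span_of c) \<le> 4"
  shows "card (free_edges c) \<le> 2"
proof -
  have m: "m1 \<in> M" "m2 \<in> M" "m1 \<in> E" "m2 \<in> E"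
    using matched M_subset_E unfolding matched_edges_def by auto
  obtain x x' where x: "m1 = {x, x'}"
    using card_edge[OF m(3)] card_2_iff by metis
  obtain y y' where y: "m2 = {y, y'}"
    using card_edge[OF m(4)] card_2_iff by metis
  have "card (matched_span c) = 4"
    using card_matched_span matched by simp
  then have "span_of c = matched_span c"
    using span_of_eq_if_card_le[OF matched_span_subset_span_of] small by simp
  also have "matched_span c = {x, x', y, y'}"
    using matched x y unfolding matched_span_def by auto
  finally have span_eq: "span_of c = {x, x', y, y'}" .
  have in_E: "e \<in> free_edges c \<Longrightarrow> e \<in> E" for e
    using free_edgesD(1) .
  have "free_edges c \<subseteq> {{x, y}, {x, y'}, {x', y'}, {x', y}}"
  proof
    fix e assume "e \<in> free_edges c"
    then show "e \<in> {{x, y}, {x, y'}, {x', y'}, {x', y}}"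
      using two_subset_of_four[of e x x' y y'] free_edgesD[of e c] span_eq x y m(1,2) by blast
  qed
  \<comment> \<open>The four cross edges form a 4-cycle in which consecutive edges close a triangle
    with \<open>m1\<close> or \<open>m2\<close>.\<close>
  moreover have "\<not> ({x, y} \<in> free_edges c \<and> {x, y'} \<in> free_edges c)"
    using no_triangle[of x y y'] in_E m(4) y by blast
  moreover have "\<not> ({x, y'} \<in> free_edges c \<and> {x', y'} \<in> free_edges c)"
    using no_triangle[of y' x x'] in_E m(3) x by (metis insert_commute)
  moreover have "\<not> ({x', y'} \<in> free_edges c \<and> {x', y} \<in> free_edges c)"
    using no_triangle[of x' y y'] in_E m(4) y by blast
  moreover have "\<not> ({x', y} \<in> free_edges c \<and> {x, y} \<in> free_edges c)"
    using no_triangle[of y x x'] in_E m(3) x by (metis insert_commute)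
  ultimately show ?thesis
    by (rule card_le_2_if_no_two_consecutive)
qed

lemma colour_charge_narrow:
  assumes colour: "c \<in> colours" and narrow: "\<not> wide c" and "\<not> solo c"
  shows "10 + 4 * card (free_edges c) + card (matched_span c) \<le> 6 * card (span_of c)"
proof -
  have "card (matched_span c) \<le> card (span_of c)"
    by (rule card_mono[OF finite_span_of matched_span_subset_span_of])
  then have bounds: "2 * card (matched_edges c) \<le> card (span_of c)"
    "2 * card (span_of c) < 6 + 2 * card (matched_edges c)"
    using narrow card_matched_span unfolding wide_def by simp_all
  then consider "card (matched_edges c) = 0" | "card (matched_edges c) = 1" | "card (matched_edges c) = 2"
    by linarith
  then show ?thesis
  proof cases
    case 1
    then have "matched_edges c = {}"
      using finite_matched_edges by simp
    moreover have "card (span_of c) \<le> 2"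
      using bounds(2) 1 by linarith
    ultimately have "solo c"
      by (rule solo_if_unmatched[OF colour])
    with \<open>\<not> solo c\<close> show ?thesis
      by contradiction
  next
    case 2
    then obtain m where "matched_edges c = {m}"
      by (rule card_1_singletonE)
    then have "card (free_edges c) + 2 \<le> card (span_of c)"
      by (rule card_free_edges_one_matched) (use bounds(2) 2 in linarith)
    then show ?thesis
      using card_matched_span[of c] 2 by linarith
  next
    case 3
    then obtain m1 m2 where "matched_edges c = {m1, m2}" "m1 \<noteq> m2"
      unfolding card_2_iff by blast
    then have "card (free_edges c) \<le> 2"
      by (rule card_free_edges_two_matched) (use bounds(2) 3 in linarith)
    then show ?thesis
      using card_matched_span[of c] bounds 3 by linarith
  qed
qed

lemma colour_charge_le:
  assumes "c \<in> colours"
  shows "10 + 4 * merge_cost c + matched_charge c \<le> 6 * card (span_of c) + solo_charge c"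
proof -
  have charge_le: "matched_charge c \<le> card (matched_span c)"
    unfolding matched_charge_def
    by (rule card_mono[OF finite_subset[OF matched_span_subset_span_of finite_span_of]]) blast
  consider "wide c" | "\<not> wide c" "solo c" | "\<not> wide c" "\<not> solo c"
    by blast
  then show ?thesis
  proof cases
    case 1
    then show ?thesis
      using charge_le card_span_of_ge_2[OF assms] unfolding merge_cost_def wide_def by simp
  next
    case 2
    then obtain e where "e \<in> E" "span_of c = e" "free_edges c = {e}" "matched_edges c = {}"
      using soloE by blast
    moreover have "card e = 2"
      using card_edge \<open>e \<in> E\<close> .
    ultimately show ?thesis
      using 2 charge_le unfolding merge_cost_def solo_charge_def matched_span_def by simp
  next
    case 3
    then show ?thesis
      using colour_charge_narrow[OF assms] charge_le unfolding merge_cost_def solo_charge_def by simp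
  qed
qed

lemma colours_at: "{c \<in> colours. v \<in> span_of c} = col ` {e\<in>E. v \<in> e}"
proof (intro equalityI subsetI)
  fix c assume "c \<in> {c \<in> colours. v \<in> span_of c}"
  then obtain e where "e \<in> E" "v \<in> e" "col e = c"
    unfolding span_of_def by blast
  then show "c \<in> col ` {e\<in>E. v \<in> e}"
    by blast
qed (auto simp: colours_def span_of_def)

lemma sum_card_span_of_le: "(\<Sum>c\<in>colours. card (span_of c)) \<le> 2 * card V"
proof -
  have "{v\<in>V. v \<in> span_of c} = span_of c" for c
    using span_of_subset by blast
  then have "(\<Sum>c\<in>colours. card (span_of c)) = (\<Sum>c\<in>colours. card {v\<in>V. v \<in> span_of c})"
    by simp
  also have "\<dots> = (\<Sum>v\<in>V. card {c\<in>colours. v \<in> span_of c})"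
    by (rule sum_card_Collect_swap[OF finite_colours finite_V])
  also have "\<dots> \<le> (\<Sum>v\<in>V. 2)"
    by (rule sum_mono) (simp add: colours_at card_colours_at)
  finally show ?thesis
    by simp
qed

text \<open>The colour of the matching edge at a vertex is never solo, so a vertex sees at most one
  solo colour, and if it does, the matching colour receives its charge.\<close>
lemma card_solo_colours_at_le:
  assumes "v \<in> V"
  shows "card {c\<in>colours. v \<in> span_of c \<and> solo c}
    \<le> card {c\<in>colours. v \<in> matched_span c \<and> touches_solo v}"
proof (cases "touches_solo v")
  case False
  then have "{c\<in>colours. v \<in> span_of c \<and> solo c} = {}"
    unfolding touches_solo_def by blast
  then show ?thesis
    by (metis card.empty le0)
next
  case True
  obtain m where m: "m \<in> M" "v \<in> m"
    using matching_covers[OF assms] by blast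
  then have m_at: "col m \<in> col ` {e\<in>E. v \<in> e}"
    using M_subset_E by blast
  have "col m \<in> {c\<in>colours. v \<in> matched_span c \<and> touches_solo v}"
    using m m_at True unfolding colours_def matched_span_def matched_edges_def by blast
  then have "1 \<le> card {c\<in>colours. v \<in> matched_span c \<and> touches_solo v}"
    using card_mono[of _ "{col m}"] finite_colours by simp
  moreover have "{c\<in>colours. v \<in> span_of c \<and> solo c} \<subseteq> {c\<in>colours. v \<in> span_of c} - {col m}"
    using not_solo_matched[OF m(1)] by blast
  then have "card {c\<in>colours. v \<in> span_of c \<and> solo c} \<le> card (col ` {e\<in>E. v \<in> e} - {col m})"
    unfolding colours_at using finite_E by (intro card_mono) simp_all
  moreover have "card (col ` {e\<in>E. v \<in> e} - {col m}) \<le> 1"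
    using card_Diff_singleton[OF m_at] card_colours_at[OF assms] by simp
  ultimately show ?thesis
    by linarith
qed

lemma sum_solo_charge_le: "(\<Sum>c\<in>colours. solo_charge c) \<le> (\<Sum>c\<in>colours. matched_charge c)"
proof -
  have "solo_charge c = card {v\<in>V. v \<in> span_of c \<and> solo c}" for c
  proof (cases "solo c")
    case True
    then have "{v\<in>V. v \<in> span_of c \<and> solo c} = span_of c"
      using span_of_subset by blast
    with True show ?thesis
      by (simp add: solo_charge_def)
  qed (simp add: solo_charge_def)
  then have "(\<Sum>c\<in>colours. solo_charge c) = (\<Sum>c\<in>colours. card {v\<in>V. v \<in> span_of c \<and> solo c})"
    by simp
  also have "\<dots> = (\<Sum>v\<in>V. card {c\<in>colours. v \<in> span_of c \<and> solo c})"
    by (rule sum_card_Collect_swap[OF finite_colours finite_V])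
  also have "\<dots> \<le> (\<Sum>v\<in>V. card {c\<in>colours. v \<in> matched_span c \<and> touches_solo v})"
    by (rule sum_mono) (rule card_solo_colours_at_le)
  also have "\<dots> = (\<Sum>c\<in>colours. card {v\<in>V. v \<in> matched_span c \<and> touches_solo v})"
    by (rule sum_card_Collect_swap[OF finite_V finite_colours])
  also have "\<dots> = (\<Sum>c\<in>colours. matched_charge c)"
  proof -
    have "{v\<in>V. v \<in> matched_span c \<and> touches_solo v} = {v \<in> matched_span c. touches_solo v}" for c
      using matched_span_subset_span_of span_of_subset by blast
    then show ?thesis
      unfolding matched_charge_def by simp
  qed
  finally show ?thesis .
qed

lemma sum_merge_cover: "(\<Sum>W\<in>merge_cover c. card W - 1) = merge_cost c"
proof (cases "wide c")
  case False
  have "(\<Sum>W\<in>free_edges c. card W - 1) = (\<Sum>W\<in>free_edges c. 1)"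
    using free_edgesD(4) by (intro sum.cong) simp_all
  with False show ?thesis
    unfolding merge_cover_def merge_cost_def by simp
qed (simp add: merge_cover_def merge_cost_def)

lemma merge_cover_subset:
  assumes "W \<in> merge_cover c"
  shows "W \<subseteq> V"
proof (cases "wide c")
  case True
  with assms show ?thesis
    by (simp add: merge_cover_def span_of_subset)
next
  case False
  with assms show ?thesis
    by (simp add: merge_cover_def free_edges_def edge_subset)
qed

lemma card_V_le_num_components_add_merge_cost:
  "card V \<le> num_components V (E - M) + (\<Sum>c\<in>colours. merge_cost c)"
proof -
  have finite_cover: "finite (merge_cover c)" for c
    unfolding merge_cover_def free_edges_def using finite_E by simp
  have "card V \<le> num_components V (E - M) + (\<Sum>i\<in>Sigma colours merge_cover. card (snd i) - 1)"
  proof (rule card_le_num_components_add_sum[OF finite_V])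
    show "finite (Sigma colours merge_cover)"
      using finite_colours finite_cover by simp
    show "snd i \<subseteq> V" if "i \<in> Sigma colours merge_cover" for i
      using that merge_cover_subset by (metis SigmaE snd_conv)
    show "e \<noteq> {} \<and> (\<exists>i\<in>Sigma colours merge_cover. e \<subseteq> snd i)" if e: "e \<in> E - M" for e
    proof
      show "e \<noteq> {}"
        using card_edge e by fastforce
      have "col e \<in> colours" "e \<in> free_edges (col e)"
        using e unfolding colours_def free_edges_def by simp_all
      then show "\<exists>i\<in>Sigma colours merge_cover. e \<subseteq> snd i"
        using edge_subset_span_of[of e] e unfolding merge_cover_def
        by (cases "wide (col e)") force+
    qed
  qed
  also have "(\<Sum>i\<in>Sigma colours merge_cover. card (snd i) - 1)
      = (\<Sum>c\<in>colours. \<Sum>W\<in>merge_cover c. card W - 1)"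
    using sum.Sigma[OF finite_colours, of merge_cover "\<lambda>c W. card W - 1"] finite_cover
    by (simp add: split_def)
  also have "\<dots> = (\<Sum>c\<in>colours. merge_cost c)"
    by (rule sum.cong[OF refl]) (rule sum_merge_cover)
  finally show ?thesis .
qed

lemma five_card_colours_le: "5 * card colours \<le> 4 * card V + 2 * num_components V (E - M)"
proof -
  have "(\<Sum>c\<in>colours. 10 + 4 * merge_cost c + matched_charge c)
      \<le> (\<Sum>c\<in>colours. 6 * card (span_of c) + solo_charge c)"
    by (rule sum_mono) (rule colour_charge_le)
  then have "10 * card colours + 4 * (\<Sum>c\<in>colours. merge_cost c) + (\<Sum>c\<in>colours. matched_charge c)
      \<le> 6 * (\<Sum>c\<in>colours. card (span_of c)) + (\<Sum>c\<in>colours. solo_charge c)"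
    by (simp add: sum.distrib sum_distrib_left)
  then show ?thesis
    using sum_card_span_of_le card_V_le_num_components_add_merge_cost sum_solo_charge_le by linarith
qed

end

theorem theorem1:
  fixes V :: "'a set" and E M :: "'a set set"
  assumes "simple_graph V E"
    and "triangle_free E"
    and "perfect_matching V E M"
  shows "real (OPT V E) \<le> 8 / 5 * real (card M + num_components V (E - M))"
proof -
  obtain col where col: "edge_2_colouring V E col" "OPT V E = card (col ` E)"
    using OPT_attained[OF finite_edges[OF assms(1)]] .
  interpret coloured_matched_graph V E M col
    using assms col(1) by unfold_locales
  have "5 * OPT V E \<le> 8 * card M + 2 * num_components V (E - M)"
    using five_card_colours_le card_perfect_matching[OF assms(1,3)] col(2)
    unfolding colours_def by linarith
  then have "real (5 * OPT V E) \<le> real (8 * card M + 2 * num_components V (E - M))"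
    by (rule of_nat_mono)
  then show ?thesis
    by simp
qed

end
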